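(* Let $\{ N_\alpha : A \to A \}_{\alpha \in \Omega}$ be a Nijenhuis family on an associative algebra $A$. Then the linear map $N: A \otimes \mathbf{k}\Omega \to A \otimes \mathbf{k}\Omega$, $N(a \otimes \alpha) = N_\alpha(a) \otimes \alpha$, is a Nijenhuis operator on the algebra $A \otimes \mathbf{k}\Omega$, i.e. $N(X)\bullet N(Y) = N\big(N(X)\bullet Y + X\bullet N(Y) - N(X\bullet Y)\big)$ for all $X,Y$.
   Context: $\Omega$ is a semigroup and $\mathbf{k}\Omega$ its semigroup algebra. A Nijenhuis family is a collection of linear maps $N_\alpha:A\to A$ with $N_\alpha(a) \cdot N_\beta(b) = N_{\alpha \beta} \big( N_\alpha (a) \cdot b + a \cdot N_\beta(b) - N_{\alpha \beta}(a \cdot b) \big)$ for all $a,b\in A$, $\alpha,\beta\in\Omega$. $A\otimes\mathbf{k}\Omega$ has product $(a \otimes \alpha) \bullet (b \otimes \beta) = a \cdot b \otimes \alpha \beta$. *)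

theory Defs
  imports "HOL-Library.Poly_Mapping"
begin

definition nijenhuis_family :: "('w::semigroup_mult \<Rightarrow> 'a::ring \<Rightarrow> 'a) \<Rightarrow> bool" where
  "nijenhuis_family N \<longleftrightarrow>
     (\<forall>\<alpha> \<beta> a b. N \<alpha> a * N \<beta> b =
        N (\<alpha> * \<beta>) (N \<alpha> a * b + a * N \<beta> b - N (\<alpha> * \<beta>) (a * b)))"

text \<open>A \<otimes> k\<Omega> is identified with finitely supported functions \<Omega> =>0 A:
  the element \<Sum> a_\<alpha> \<otimes> \<alpha> corresponds to \<alpha> \<mapsto> a_\<alpha>; a \<otimes> \<alpha> is Poly_Mapping.single \<alpha> a.\<close>

definition tprod :: "('w::semigroup_mult \<Rightarrow>\<^sub>0 'a::ring) \<Rightarrow> ('w \<Rightarrow>\<^sub>0 'a) \<Rightarrow> ('w \<Rightarrow>\<^sub>0 'a)" where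
  "tprod X Y = (\<Sum>\<alpha>\<in>Poly_Mapping.keys X. \<Sum>\<beta>\<in>Poly_Mapping.keys Y.
      Poly_Mapping.single (\<alpha> * \<beta>) (Poly_Mapping.lookup X \<alpha> * Poly_Mapping.lookup Y \<beta>))"

definition tensorN :: "('w \<Rightarrow> 'a::ring \<Rightarrow> 'a) \<Rightarrow> ('w \<Rightarrow>\<^sub>0 'a) \<Rightarrow> ('w \<Rightarrow>\<^sub>0 'a)" where
  "tensorN N X = (\<Sum>\<alpha>\<in>Poly_Mapping.keys X. Poly_Mapping.single \<alpha> (N \<alpha> (Poly_Mapping.lookup X \<alpha>)))"

end

theory Submission
  imports Defs HOL.Modules
begin

text \<open>Both sides of the identity are bilinear in X and Y, so expanding X and Y over their
  supports reduces it, summand by summand on a \<otimes> \<alpha> and b \<otimes> \<beta>, to the defining identity of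
  the Nijenhuis family for the indices \<alpha> and \<beta>.\<close>

lemma lookup_tensorN:
  assumes "\<And>\<alpha>. N \<alpha> 0 = 0"
  shows "Poly_Mapping.lookup (tensorN N X) \<gamma> = N \<gamma> (Poly_Mapping.lookup X \<gamma>)"
proof -
  have "Poly_Mapping.lookup (tensorN N X) \<gamma> =
      (\<Sum>\<alpha>\<in>Poly_Mapping.keys X. N \<alpha> (Poly_Mapping.lookup X \<alpha>) when \<alpha> = \<gamma>)"
    unfolding tensorN_def lookup_sum by (simp add: lookup_single eq_commute)
  also have "\<dots> = N \<gamma> (Poly_Mapping.lookup X \<gamma>)"
    using assms by (auto simp: in_keys_iff when_def)
  finally show ?thesis .
qed

lemma keys_tensorN_subset:
  assumes "\<And>\<alpha>. N \<alpha> 0 = 0"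
  shows "Poly_Mapping.keys (tensorN N X) \<subseteq> Poly_Mapping.keys X"
  using assms by (auto simp: in_keys_iff lookup_tensorN)

lemma tensorN_single:
  assumes "\<And>\<alpha>. N \<alpha> 0 = 0"
  shows "tensorN N (Poly_Mapping.single \<alpha> a) = Poly_Mapping.single \<alpha> (N \<alpha> a)"
  using assms by (intro poly_mapping_eqI) (simp add: lookup_tensorN lookup_single when_def)

lemma additive_tensorN:
  assumes "\<And>\<alpha>. additive (N \<alpha>)"
  shows "additive (tensorN N)"
proof
  have "\<And>\<alpha>. N \<alpha> 0 = 0" using assms by (rule additive.zero)
  then show "tensorN N (X + Y) = tensorN N X + tensorN N Y" for X Y
    using assms by (intro poly_mapping_eqI) (simp add: lookup_tensorN lookup_add additive.add)
qed

lemma tprod_eq_sum_supersets: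
  assumes "finite S" "Poly_Mapping.keys X \<subseteq> S" "finite T" "Poly_Mapping.keys Y \<subseteq> T"
  shows "tprod X Y = (\<Sum>\<alpha>\<in>S. \<Sum>\<beta>\<in>T.
      Poly_Mapping.single (\<alpha> * \<beta>) (Poly_Mapping.lookup X \<alpha> * Poly_Mapping.lookup Y \<beta>))"
  unfolding tprod_def using assms
  by (intro sum.mono_neutral_cong_left) (auto simp: in_keys_iff)

theorem proposition2p9:
  fixes N :: "'w::semigroup_mult \<Rightarrow> 'a::ring \<Rightarrow> 'a"
  assumes linear: "\<And>\<alpha> a b. N \<alpha> (a + b) = N \<alpha> a + N \<alpha> b"
    and fam: "nijenhuis_family N"
  shows "\<forall>X Y. tprod (tensorN N X) (tensorN N Y) =
           tensorN N (tprod (tensorN N X) Y + tprod X (tensorN N Y) - tensorN N (tprod X Y))"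
proof (intro allI)
  fix X Y :: "'w \<Rightarrow>\<^sub>0 'a"
  have additive: "\<And>\<alpha>. additive (N \<alpha>)" using linear by unfold_locales
  then have zero: "\<And>\<alpha>. N \<alpha> 0 = 0" by (rule additive.zero)
  interpret tensorN: additive "tensorN N" using additive by (rule additive_tensorN)
  let ?x = "Poly_Mapping.lookup X" and ?y = "Poly_Mapping.lookup Y"
  let ?expand = "\<lambda>c. \<Sum>\<alpha>\<in>Poly_Mapping.keys X. \<Sum>\<beta>\<in>Poly_Mapping.keys Y.
      Poly_Mapping.single (\<alpha> * \<beta>) (c \<alpha> \<beta> :: 'a)"
  have expand: "tprod P Q = ?expand (\<lambda>\<alpha> \<beta>. Poly_Mapping.lookup P \<alpha> * Poly_Mapping.lookup Q \<beta>)"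
    if "P \<in> {X, tensorN N X}" "Q \<in> {Y, tensorN N Y}" for P Q
    using that keys_tensorN_subset[of N, OF zero] by (intro tprod_eq_sum_supersets) auto
  have tensorN_expand: "tensorN N (?expand c) = ?expand (\<lambda>\<alpha> \<beta>. N (\<alpha> * \<beta>) (c \<alpha> \<beta>))" for c
    by (simp add: tensorN.sum tensorN_single[of N, OF zero])
  have "tprod (tensorN N X) Y + tprod X (tensorN N Y) - tensorN N (tprod X Y) =
      ?expand (\<lambda>\<alpha> \<beta>. N \<alpha> (?x \<alpha>) * ?y \<beta> + ?x \<alpha> * N \<beta> (?y \<beta>) - N (\<alpha> * \<beta>) (?x \<alpha> * ?y \<beta>))"
    by (simp only: expand tensorN_expand lookup_tensorN[of N, OF zero] insert_iff
        single_add single_diff sum.distrib sum_subtractf simp_thms)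
  then show "tprod (tensorN N X) (tensorN N Y) =
      tensorN N (tprod (tensorN N X) Y + tprod X (tensorN N Y) - tensorN N (tprod X Y))"
    using fam unfolding nijenhuis_family_def
    by (simp only: expand tensorN_expand lookup_tensorN[of N, OF zero] insert_iff simp_thms)
qed

end
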